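(* Let $\mathfrak V$ be a vessel on $\Omega\subseteq\mathbb R$ with transfer function $S(\lambda,x)=I-C(x)\mathbb X^{-1}(x)(\lambda I-A)^{-1}B(x)\sigma_1$. Fix $\lambda$ not in the spectrum of $A$, and let $u(\lambda,x)\in\mathbb C^2$ be a differentiable solution (in $x$) of $\lambda\sigma_2u-\sigma_1\partial_xu+\gamma u=0$. Then $y(\lambda,x)=S(\lambda,x)u(\lambda,x)$ satisfies $\lambda\sigma_2y-\sigma_1\partial_xy+\gamma_*(x)y=0$ for $x\in\Omega$.
   Context: A Krein space $\mathcal K$ is a Hilbert space with an extra continuous Hermitian (possibly indefinite) sesquilinear form; adjoints are taken with respect to it. Fix $2\times2$ matrices $\sigma_1$ (invertible, $\sigma_1=\sigma_1^*$), $\sigma_2=\sigma_2^*$, $\gamma=-\gamma^*$. A node $(C,A_\zeta,\mathbb X,A,B;\sigma_1)$: bounded $C:\mathcal K\to\mathbb C^2$, $\mathbb X:\mathcal K\to\mathcal K$, $B:\mathbb C^2\to\mathcal K$, and generators $A,A_\zeta$ of strongly continuous groups with common dense domain $D(A)=D(A_\zeta)$, such that $\mathbb X(D(A))\subseteq D(A)$ and $A\mathbb Xu+\mathbb XA_\zeta u+B\sigma_1Cu=0$ for $u\in D(A)$; invertible if $\mathbb X$ is boundedly invertible and $\mathbb X^{-1}(D(A))\subseteq D(A)$. A prevessel consists of fixed $A,A_\zeta$ and bounded operators $C(x),\mathbb X(x),B(x)$, differentiable in $x\in\mathbb R$, such that for each $x$ the tuple is a node, $B(x)\sigma_2e\in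 D(A)$ for all $e\in\mathbb C^2$, and $\partial_xB=-(AB\sigma_2+B\gamma)\sigma_1^{-1}$, $\partial_xCu=\sigma_1^{-1}(-\sigma_2CA_\zeta u+\gamma Cu)$ ($u\in D(A)$), $\partial_x\mathbb X=B\sigma_2C$. A vessel on $\Omega\subseteq\mathbb R$ is a prevessel such that for each $x\in\Omega$, $\mathbb X(x)$ is invertible and the node at $x$ is invertible, together with $\gamma_*(x)=\gamma+\sigma_2C\mathbb X^{-1}B\sigma_1-\sigma_1C\mathbb X^{-1}B\sigma_2$ on $\Omega$ (linkage condition). *)

theory Defs
  imports "HOL-Analysis.Analysis"
begin

text \<open>A complex Hilbert space is modelled as a real Hilbert space (type class real_inner,
complete_space) together with a complex scalar multiplication sc that extends the real one
and is compatible with the norm.\<close>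

definition complex_structure :: "(complex \<Rightarrow> 'k::real_normed_vector \<Rightarrow> 'k) \<Rightarrow> bool" where
  "complex_structure sc \<longleftrightarrow>
     (\<forall>a b x. sc a (sc b x) = sc (a * b) x) \<and>
     (\<forall>a x y. sc a (x + y) = sc a x + sc a y) \<and>
     (\<forall>a b x. sc (a + b) x = sc a x + sc b x) \<and>
     (\<forall>r x. sc (complex_of_real r) x = r *\<^sub>R x) \<and>
     (\<forall>a x. norm (sc a x) = cmod a * norm x)"

definition krein_space ::
  "(complex \<Rightarrow> 'k::{real_inner,complete_space} \<Rightarrow> 'k) \<Rightarrow> ('k \<Rightarrow> 'k \<Rightarrow> complex) \<Rightarrow> bool" where
  "krein_space sc F \<longleftrightarrow> complex_structure sc \<and>
     (\<forall>x y z. F (x + y) z = F x z + F y z) \<and>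
     (\<forall>c x y. F (sc c x) y = c * F x y) \<and>
     (\<forall>x y. F y x = cnj (F x y)) \<and>
     (\<exists>K. \<forall>x y. cmod (F x y) \<le> K * norm x * norm y)"

definition clinear_op :: "(complex \<Rightarrow> 'k::real_normed_vector \<Rightarrow> 'k) \<Rightarrow> ('k \<Rightarrow> 'k) \<Rightarrow> bool" where
  "clinear_op sc T \<longleftrightarrow> bounded_linear T \<and> (\<forall>c u. T (sc c u) = sc c (T u))"

definition clinear_to :: "(complex \<Rightarrow> 'k::real_normed_vector \<Rightarrow> 'k) \<Rightarrow> ('k \<Rightarrow> complex^2) \<Rightarrow> bool" where
  "clinear_to sc T \<longleftrightarrow> bounded_linear T \<and> (\<forall>c u. T (sc c u) = c *s T u)"

definition clinear_from :: "(complex \<Rightarrow> 'k::real_normed_vector \<Rightarrow> 'k) \<Rightarrow> (complex^2 \<Rightarrow> 'k) \<Rightarrow> bool" where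
  "clinear_from sc T \<longleftrightarrow> bounded_linear T \<and> (\<forall>c e. T (c *s e) = sc c (T e))"

definition cmat :: "(complex^2 \<Rightarrow> complex^2) \<Rightarrow> complex^2^2" where
  "cmat f = (\<chi> i j. f (axis j 1) $ i)"

definition cadj :: "complex^2^2 \<Rightarrow> complex^2^2" where
  "cadj M = (\<chi> i j. cnj (M $ j $ i))"

definition sc_group_gen ::
  "(complex \<Rightarrow> 'k::real_normed_vector \<Rightarrow> 'k) \<Rightarrow> (real \<Rightarrow> 'k \<Rightarrow> 'k) \<Rightarrow> ('k \<Rightarrow> 'k) \<Rightarrow> 'k set \<Rightarrow> bool" where
  "sc_group_gen sc T A D \<longleftrightarrow>
     (\<forall>t. clinear_op sc (T t)) \<and> T 0 = id \<and> (\<forall>s t. T (s + t) = T s \<circ> T t) \<and>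
     (\<forall>u. continuous_on UNIV (\<lambda>t. T t u)) \<and>
     D = {u. \<exists>v. ((\<lambda>h. inverse h *\<^sub>R (T h u - u)) \<longlongrightarrow> v) (at 0)} \<and>
     (\<forall>u\<in>D. ((\<lambda>h. inverse h *\<^sub>R (T h u - u)) \<longlongrightarrow> A u) (at 0))"

definition group_generator :: "(complex \<Rightarrow> 'k::real_normed_vector \<Rightarrow> 'k) \<Rightarrow> ('k \<Rightarrow> 'k) \<Rightarrow> 'k set \<Rightarrow> bool" where
  "group_generator sc A D \<longleftrightarrow> (\<exists>T. sc_group_gen sc T A D)"

definition is_resolvent ::
  "(complex \<Rightarrow> 'k::real_normed_vector \<Rightarrow> 'k) \<Rightarrow> ('k \<Rightarrow> 'k) \<Rightarrow> 'k set \<Rightarrow> complex \<Rightarrow> ('k \<Rightarrow> 'k) \<Rightarrow> bool" where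
  "is_resolvent sc A D lam R \<longleftrightarrow> clinear_op sc R \<and> range R \<subseteq> D \<and>
     (\<forall>u. sc lam (R u) - A (R u) = u) \<and> (\<forall>v\<in>D. R (sc lam v - A v) = v)"

definition op_spectrum :: "(complex \<Rightarrow> 'k::real_normed_vector \<Rightarrow> 'k) \<Rightarrow> ('k \<Rightarrow> 'k) \<Rightarrow> 'k set \<Rightarrow> complex set" where
  "op_spectrum sc A D = {lam. \<not> (\<exists>R. is_resolvent sc A D lam R)}"

definition resolvent :: "(complex \<Rightarrow> 'k::real_normed_vector \<Rightarrow> 'k) \<Rightarrow> ('k \<Rightarrow> 'k) \<Rightarrow> 'k set \<Rightarrow> complex \<Rightarrow> 'k \<Rightarrow> 'k" where
  "resolvent sc A D lam = (THE R. is_resolvent sc A D lam R)"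

definition is_node ::
  "(complex \<Rightarrow> 'k::real_normed_vector \<Rightarrow> 'k) \<Rightarrow> complex^2^2 \<Rightarrow> ('k \<Rightarrow> complex^2) \<Rightarrow> ('k \<Rightarrow> 'k) \<Rightarrow> ('k \<Rightarrow> 'k)
    \<Rightarrow> ('k \<Rightarrow> 'k) \<Rightarrow> (complex^2 \<Rightarrow> 'k) \<Rightarrow> 'k set \<Rightarrow> bool" where
  "is_node sc \<sigma>1 C A\<zeta> X A B D \<longleftrightarrow>
     clinear_to sc C \<and> clinear_op sc X \<and> clinear_from sc B \<and>
     group_generator sc A D \<and> group_generator sc A\<zeta> D \<and> closure D = UNIV \<and>
     X ` D \<subseteq> D \<and>
     (\<forall>u\<in>D. A (X u) + X (A\<zeta> u) + B (\<sigma>1 *v C u) = 0)"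

definition invertible_node ::
  "(complex \<Rightarrow> 'k::real_normed_vector \<Rightarrow> 'k) \<Rightarrow> complex^2^2 \<Rightarrow> ('k \<Rightarrow> complex^2) \<Rightarrow> ('k \<Rightarrow> 'k) \<Rightarrow> ('k \<Rightarrow> 'k)
    \<Rightarrow> ('k \<Rightarrow> 'k) \<Rightarrow> (complex^2 \<Rightarrow> 'k) \<Rightarrow> 'k set \<Rightarrow> bool" where
  "invertible_node sc \<sigma>1 C A\<zeta> X A B D \<longleftrightarrow>
     is_node sc \<sigma>1 C A\<zeta> X A B D \<and> bij X \<and> clinear_op sc (inv X) \<and> inv X ` D \<subseteq> D"

text \<open>Differentiability in x is understood strongly (pointwise on vectors).\<close>
definition prevessel ::
  "(complex \<Rightarrow> 'k::real_normed_vector \<Rightarrow> 'k) \<Rightarrow> complex^2^2 \<Rightarrow> complex^2^2 \<Rightarrow> complex^2^2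
    \<Rightarrow> ('k \<Rightarrow> 'k) \<Rightarrow> ('k \<Rightarrow> 'k) \<Rightarrow> 'k set
    \<Rightarrow> (real \<Rightarrow> 'k \<Rightarrow> complex^2) \<Rightarrow> (real \<Rightarrow> 'k \<Rightarrow> 'k) \<Rightarrow> (real \<Rightarrow> complex^2 \<Rightarrow> 'k) \<Rightarrow> bool" where
  "prevessel sc \<sigma>1 \<sigma>2 \<gamma> A A\<zeta> D C X B \<longleftrightarrow>
     (\<forall>x. is_node sc \<sigma>1 (C x) A\<zeta> (X x) A (B x) D) \<and>
     (\<forall>x e. B x (\<sigma>2 *v e) \<in> D) \<and>
     (\<forall>x e. ((\<lambda>t. B t e) has_vector_derivative
              (- (A (B x (\<sigma>2 *v (matrix_inv \<sigma>1 *v e))) + B x (\<gamma> *v (matrix_inv \<sigma>1 *v e))))) (at x)) \<and>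
     (\<forall>x u. (\<lambda>t. C t u) differentiable (at x)) \<and>
     (\<forall>x. \<forall>u\<in>D. ((\<lambda>t. C t u) has_vector_derivative
              (matrix_inv \<sigma>1 *v (- (\<sigma>2 *v C x (A\<zeta> u)) + \<gamma> *v C x u))) (at x)) \<and>
     (\<forall>x u. ((\<lambda>t. X t u) has_vector_derivative B x (\<sigma>2 *v C x u)) (at x))"

definition vessel ::
  "(complex \<Rightarrow> 'k::real_normed_vector \<Rightarrow> 'k) \<Rightarrow> complex^2^2 \<Rightarrow> complex^2^2 \<Rightarrow> complex^2^2
    \<Rightarrow> ('k \<Rightarrow> 'k) \<Rightarrow> ('k \<Rightarrow> 'k) \<Rightarrow> 'k set
    \<Rightarrow> (real \<Rightarrow> 'k \<Rightarrow> complex^2) \<Rightarrow> (real \<Rightarrow> 'k \<Rightarrow> 'k) \<Rightarrow> (real \<Rightarrow> complex^2 \<Rightarrow> 'k)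
    \<Rightarrow> (real \<Rightarrow> complex^2^2) \<Rightarrow> real set \<Rightarrow> bool" where
  "vessel sc \<sigma>1 \<sigma>2 \<gamma> A A\<zeta> D C X B \<gamma>s \<Omega> \<longleftrightarrow>
     prevessel sc \<sigma>1 \<sigma>2 \<gamma> A A\<zeta> D C X B \<and>
     (\<forall>x\<in>\<Omega>. invertible_node sc \<sigma>1 (C x) A\<zeta> (X x) A (B x) D) \<and>
     (\<forall>x\<in>\<Omega>. \<gamma>s x = \<gamma> + \<sigma>2 ** cmat (\<lambda>e. C x (inv (X x) (B x (\<sigma>1 *v e))))
                         - \<sigma>1 ** cmat (\<lambda>e. C x (inv (X x) (B x (\<sigma>2 *v e)))))"

definition transfer_fn ::
  "(complex \<Rightarrow> 'k::real_normed_vector \<Rightarrow> 'k) \<Rightarrow> ('k \<Rightarrow> 'k) \<Rightarrow> 'k set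
    \<Rightarrow> (real \<Rightarrow> 'k \<Rightarrow> complex^2) \<Rightarrow> (real \<Rightarrow> 'k \<Rightarrow> 'k) \<Rightarrow> (real \<Rightarrow> complex^2 \<Rightarrow> 'k)
    \<Rightarrow> complex^2^2 \<Rightarrow> complex \<Rightarrow> real \<Rightarrow> complex^2^2" where
  "transfer_fn sc A D C X B \<sigma>1 lam x =
     mat 1 - cmat (\<lambda>e. C x (inv (X x) (resolvent sc A D lam (B x (\<sigma>1 *v e)))))"

end

theory Submission imports Defs begin

text \<open>The input \<open>u\<close> and the output \<open>y = S u = u - C \<bbbX>\<^sup>-\<^sup>1 (\<lambda> - A)\<^sup>-\<^sup>1 B \<sigma>\<^sub>1 u\<close>
are compared through the state \<open>z = \<bbbX>\<^sup>-\<^sup>1 (\<lambda> - A)\<^sup>-\<^sup>1 B \<sigma>\<^sub>1 u\<close>. Differentiating along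
the vessel, the evolution law of \<open>B\<close> combined with the input equation turns
\<open>\<partial>\<^sub>x ((\<lambda> - A)\<^sup>-\<^sup>1 B \<sigma>\<^sub>1 u)\<close> into \<open>B \<sigma>\<^sub>2 u\<close>; the law \<open>\<partial>\<^sub>x \<bbbX> = B \<sigma>\<^sub>2 C\<close> then gives
\<open>\<partial>\<^sub>x z = \<bbbX>\<^sup>-\<^sup>1 B \<sigma>\<^sub>2 y\<close>, and the node equation expresses \<open>C A\<^sub>\<zeta> z\<close> through \<open>y\<close> and
\<open>\<lambda> C z\<close>. Substituting into the output equation, the terms \<open>\<sigma>\<^sub>2 C \<bbbX>\<^sup>-\<^sup>1 B \<sigma>\<^sub>1 y\<close> and
\<open>\<sigma>\<^sub>1 C \<bbbX>\<^sup>-\<^sup>1 B \<sigma>\<^sub>2 y\<close> cancel exactly against the correction \<open>\<gamma>\<^sub>* - \<gamma>\<close> of the linkage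
condition, and what remains is the input equation for \<open>u = y + C z\<close>.

All derivatives in \<open>x\<close> are strong, so the calculus of operator families needs
uniform bounds, which come from the uniform boundedness principle.\<close>

lemma uniform_boundedness:
  fixes T :: "'i \<Rightarrow> 'a::{real_normed_vector,complete_space} \<Rightarrow> 'b::real_normed_vector"
  assumes lin: "\<And>i. i \<in> I \<Longrightarrow> bounded_linear (T i)"
    and pointwise_bounded: "\<And>v. \<exists>K. \<forall>i\<in>I. norm (T i v) \<le> K"
  shows "\<exists>M. \<forall>i\<in>I. \<forall>v. norm (T i v) \<le> M * norm v"
proof -
  define E where "E n = {v. \<forall>i\<in>I. norm (T i v) \<le> real n}" for n :: nat
  have closed_E: "closed (E n)" for n
  proof -
    have "E n = (\<Inter>i\<in>I. {v. norm (T i v) \<le> real n})" by (auto simp: E_def)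
    moreover have "closed {v. norm (T i v) \<le> real n}" if "i \<in> I" for i
      using lin[OF that]
      by (intro closed_Collect_le continuous_intros) (auto intro: bounded_linear.continuous_on)
    ultimately show ?thesis by auto
  qed
  have "(\<Union>n. E n) = UNIV"
  proof (intro set_eqI iffI UNIV_I)
    fix v
    obtain K where K: "\<forall>i\<in>I. norm (T i v) \<le> K" using pointwise_bounded by blast
    obtain n where "K \<le> real n" using real_arch_simple by blast
    then have "v \<in> E n" using K by (force simp: E_def)
    then show "v \<in> (\<Union>n. E n)" by blast
  qed
  then have "\<exists>n. interior (E n) \<noteq> {}"
    using Baire_category_alt[of euclidean "range E"]
    by (auto simp: completely_metrizable_space_euclidean closed_E closed_closedin[symmetric])
      (use closed_E in blast)
  then obtain n v0 where "v0 \<in> interior (E n)" by blast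
  then obtain r where r: "r > 0" "ball v0 r \<subseteq> E n"
    by (meson open_contains_ball open_interior interior_subset subset_trans)
  show ?thesis
  proof (intro exI ballI allI)
    fix i v assume i: "i \<in> I"
    interpret T: bounded_linear "T i" using lin[OF i] .
    show "norm (T i v) \<le> (4 * real n / r) * norm v"
    proof (cases "v = 0")
      case True then show ?thesis by (simp add: T.zero)
    next
      case False
      define w where "w = (r / (2 * norm v)) *\<^sub>R v"
      have "norm w < r" using False r by (simp add: w_def)
      then have "v0 + w \<in> E n" "v0 \<in> E n"
        using r by (auto simp: dist_norm)
      then have "norm (T i (v0 + w)) \<le> real n" "norm (T i v0) \<le> real n"
        using i by (auto simp: E_def)
      then have "norm (T i w) \<le> 2 * real n"
        using norm_triangle_ineq4[of "T i (v0 + w)" "T i v0"] by (simp add: T.add)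
      moreover have "T i v = (2 * norm v / r) *\<^sub>R T i w"
        using False r by (simp add: w_def T.scaleR)
      ultimately have "norm (T i v) \<le> (2 * norm v / r) * (2 * real n)"
        using r by (simp add: mult_left_mono del: times_divide_eq_left)
      then show ?thesis by (simp add: mult_ac)
    qed
  qed
qed

lemma has_vector_derivative_iff_quotient:
  fixes f :: "real \<Rightarrow> 'a::real_normed_vector"
  shows "(f has_vector_derivative f') (at x) \<longleftrightarrow>
    ((\<lambda>t. (f t - f x) /\<^sub>R (t - x)) \<longlongrightarrow> f') (at x)"
proof -
  have "(f has_vector_derivative f') (at x) \<longleftrightarrow>
     ((\<lambda>t. norm ((f t - f x) - (t - x) *\<^sub>R f') / norm (t - x)) \<longlongrightarrow> 0) (at x)"
    unfolding has_vector_derivative_def has_derivative_iff_norm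
    by (simp add: bounded_linear_scaleR_left)
  also have "\<dots> \<longleftrightarrow> ((\<lambda>t. norm ((f t - f x) /\<^sub>R (t - x) - f')) \<longlongrightarrow> 0) (at x)"
  proof (rule tendsto_cong)
    show "\<forall>\<^sub>F t in at x. norm ((f t - f x) - (t - x) *\<^sub>R f') / norm (t - x) =
        norm ((f t - f x) /\<^sub>R (t - x) - f')"
      unfolding eventually_at_filter
    proof (intro always_eventually allI impI)
      fix t :: real assume "t \<noteq> x"
      then have "(f t - f x) /\<^sub>R (t - x) - f' = (1 / (t - x)) *\<^sub>R ((f t - f x) - (t - x) *\<^sub>R f')"
        by (simp add: scaleR_diff_right divide_inverse)
      then show "norm ((f t - f x) - (t - x) *\<^sub>R f') / norm (t - x) =
          norm ((f t - f x) /\<^sub>R (t - x) - f')"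
        by (simp add: divide_simps)
    qed
  qed
  also have "\<dots> \<longleftrightarrow> ((\<lambda>t. (f t - f x) /\<^sub>R (t - x)) \<longlongrightarrow> f') (at x)"
    by (simp add: tendsto_norm_zero_iff LIM_zero_iff)
  finally show ?thesis .
qed

lemma has_vector_derivative_imp_tendsto_diff:
  assumes "(w has_vector_derivative w') (at x)"
  shows "((\<lambda>t. w t - w x) \<longlongrightarrow> 0) (at x)"
  using has_vector_derivative_continuous[OF assms] by (simp add: continuous_at LIM_zero)

text \<open>Uniform boundedness applied to the difference quotients along a sequence
\<open>t\<^sub>n \<rightarrow> x\<close> on which the Lipschitz bound fails.\<close>

lemma strongly_differentiable_locally_lipschitz:
  fixes T :: "real \<Rightarrow> 'a::{real_normed_vector,complete_space} \<Rightarrow> 'b::real_normed_vector"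
  assumes lin: "\<And>t. bounded_linear (T t)"
    and diff: "\<And>v. (\<lambda>t. T t v) differentiable (at x)"
  shows "\<exists>M \<delta>. \<delta> > 0 \<and> (\<forall>t v. \<bar>t - x\<bar> < \<delta> \<longrightarrow> norm (T t v - T x v) \<le> M * \<bar>t - x\<bar> * norm v)"
proof (rule ccontr)
  assume "\<not> ?thesis"
  then have "\<forall>n::nat. \<exists>t v. \<bar>t - x\<bar> < inverse (real (Suc n)) \<and>
      norm (T t v - T x v) > real n * \<bar>t - x\<bar> * norm v"
    by (metis inverse_positive_iff_positive not_le of_nat_0_less_iff zero_less_Suc)
  then obtain t v where close: "\<And>n. \<bar>t n - x\<bar> < inverse (real (Suc n))"
    and violates: "\<And>n. norm (T (t n) (v n) - T x (v n)) > real n * \<bar>t n - x\<bar> * norm (v n)"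
    by metis
  have t_ne: "t n \<noteq> x" for n
    using violates[of n] by auto
  have "(\<lambda>n. t n - x) \<longlonglongrightarrow> 0"
    by (rule tendsto_0_le[OF LIMSEQ_inverse_real_of_nat, where K=1])
      (use close less_imp_le in \<open>auto intro: always_eventually\<close>)
  then have t_at: "filterlim t (at x) sequentially"
    using t_ne by (intro filterlim_atI) (auto simp: LIM_zero_iff)
  define Q where "Q n w = (T (t n) w - T x w) /\<^sub>R (t n - x)" for n w
  have Q_linear: "bounded_linear (Q n)" for n
    unfolding Q_def
    by (intro bounded_linear_compose[OF bounded_linear_scaleR_right] bounded_linear_sub lin)
  have "\<exists>K. \<forall>n\<in>UNIV. norm (Q n w) \<le> K" for w
  proof -
    have "((\<lambda>s. T s w) has_vector_derivative vector_derivative (\<lambda>s. T s w) (at x)) (at x)"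
      using diff vector_derivative_works by blast
    then have "((\<lambda>s. (T s w - T x w) /\<^sub>R (s - x)) \<longlongrightarrow> vector_derivative (\<lambda>s. T s w) (at x)) (at x)"
      by (simp add: has_vector_derivative_iff_quotient)
    then have "(\<lambda>n. Q n w) \<longlonglongrightarrow> vector_derivative (\<lambda>s. T s w) (at x)"
      unfolding Q_def using t_at by (rule filterlim_compose)
    then have "Bseq (\<lambda>n. Q n w)" by (intro convergent_imp_Bseq convergentI)
    then show ?thesis by (auto simp: Bseq_def)
  qed
  then obtain M where M: "\<And>n w. norm (Q n w) \<le> M * norm w"
    using uniform_boundedness[of UNIV Q] Q_linear by blast
  obtain n :: nat where n: "M \<le> real n" using real_arch_simple by blast
  have "T (t n) (v n) - T x (v n) = (t n - x) *\<^sub>R Q n (v n)"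
    using t_ne[of n] by (simp add: Q_def)
  then have "norm (T (t n) (v n) - T x (v n)) = \<bar>t n - x\<bar> * norm (Q n (v n))" by simp
  also have "\<dots> \<le> \<bar>t n - x\<bar> * (M * norm (v n))" by (intro mult_left_mono M) auto
  also have "\<dots> \<le> \<bar>t n - x\<bar> * (real n * norm (v n))"
    by (intro mult_left_mono mult_right_mono n) auto
  finally show False using violates[of n] by (simp add: mult_ac)
qed

lemma has_vector_derivative_family_apply:
  fixes T :: "real \<Rightarrow> 'a::{real_normed_vector,complete_space} \<Rightarrow> 'b::real_normed_vector"
  assumes lin: "\<And>t. bounded_linear (T t)"
    and diff: "\<And>v. (\<lambda>t. T t v) differentiable (at x)"
    and T_deriv: "((\<lambda>t. T t (w x)) has_vector_derivative d) (at x)"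
    and w_deriv: "(w has_vector_derivative w') (at x)"
  shows "((\<lambda>t. T t (w t)) has_vector_derivative (T x w' + d)) (at x)"
proof -
  obtain M \<delta> where M: "\<delta> > 0"
    "\<And>t v. \<bar>t - x\<bar> < \<delta> \<Longrightarrow> norm (T t v - T x v) \<le> M * \<bar>t - x\<bar> * norm v"
    using strongly_differentiable_locally_lipschitz[OF lin diff] by blast
  define q where "q t = (w t - w x) /\<^sub>R (t - x)" for t
  have q: "(q \<longlongrightarrow> w') (at x)"
    using w_deriv unfolding has_vector_derivative_iff_quotient q_def[abs_def] .
  have "((\<lambda>t. T t (q t) - T x (q t)) \<longlongrightarrow> 0) (at x)"
  proof (rule Lim_null_comparison)
    show "\<forall>\<^sub>F t in at x. norm (T t (q t) - T x (q t)) \<le> M * norm (w t - w x)"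
      unfolding eventually_at
    proof (intro exI[of _ \<delta>] conjI M(1) ballI impI)
      fix t assume t: "t \<in> UNIV" "t \<noteq> x \<and> dist t x < \<delta>"
      then have "norm (T t (q t) - T x (q t)) \<le> M * (\<bar>t - x\<bar> * norm (q t))"
        using M(2)[of t "q t"] by (auto simp: dist_real_def mult.assoc)
      also have "\<bar>t - x\<bar> * norm (q t) = norm (w t - w x)"
        using t by (simp add: q_def)
      finally show "norm (T t (q t) - T x (q t)) \<le> M * norm (w t - w x)" .
    qed
    show "((\<lambda>t. M * norm (w t - w x)) \<longlongrightarrow> 0) (at x)"
      using tendsto_mult_right_zero[OF tendsto_norm_zero[OF
          has_vector_derivative_imp_tendsto_diff[OF w_deriv]]] by simp
  qed
  moreover have "((\<lambda>t. T x (q t)) \<longlongrightarrow> T x w') (at x)"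
    using bounded_linear.tendsto[OF lin q] .
  moreover have "((\<lambda>t. (T t (w x) - T x (w x)) /\<^sub>R (t - x)) \<longlongrightarrow> d) (at x)"
    using T_deriv by (simp add: has_vector_derivative_iff_quotient)
  ultimately have "((\<lambda>t. (T t (q t) - T x (q t)) + T x (q t) + (T t (w x) - T x (w x)) /\<^sub>R (t - x))
      \<longlongrightarrow> 0 + T x w' + d) (at x)"
    by (intro tendsto_add)
  then have "((\<lambda>t. T t (q t) + (T t (w x) - T x (w x)) /\<^sub>R (t - x)) \<longlongrightarrow> T x w' + d) (at x)"
    by simp
  then show ?thesis
    unfolding has_vector_derivative_iff_quotient
  proof (rule Lim_transform_eventually)
    show "\<forall>\<^sub>F t in at x. T t (q t) + (T t (w x) - T x (w x)) /\<^sub>R (t - x) =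
        (T t (w t) - T x (w x)) /\<^sub>R (t - x)"
      unfolding eventually_at_filter
    proof (intro always_eventually allI impI)
      fix t assume "t \<noteq> x"
      interpret T: bounded_linear "T t" using lin .
      show "T t (q t) + (T t (w x) - T x (w x)) /\<^sub>R (t - x) = (T t (w t) - T x (w x)) /\<^sub>R (t - x)"
        by (simp add: q_def T.scaleR T.diff scaleR_right_distrib[symmetric] del: scaleR_diff_right)
    qed
  qed
qed
lemma tendsto_zero_apply_uniformly_bounded:
  fixes S :: "'c \<Rightarrow> 'a::real_normed_vector \<Rightarrow> 'b::real_normed_vector"
  assumes "eventually (\<lambda>t. \<forall>z. norm (S t z) \<le> K * norm z) F" and "(g \<longlongrightarrow> 0) F"
  shows "((\<lambda>t. S t (g t)) \<longlongrightarrow> 0) F"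
proof (rule Lim_null_comparison)
  show "\<forall>\<^sub>F t in F. norm (S t (g t)) \<le> K * norm (g t)"
    using assms(1) by (rule eventually_mono) blast
  show "((\<lambda>t. K * norm (g t)) \<longlongrightarrow> 0) F"
    using tendsto_mult_right_zero[OF tendsto_norm_zero[OF assms(2)]] .
qed

text \<open>Once \<open>\<parallel>X t - X x\<parallel> \<parallel>(X x)\<^sup>-\<^sup>1\<parallel> \<le> 1/2\<close>,
the norm of \<open>(X t)\<^sup>-\<^sup>1\<close> is at most twice that of \<open>(X x)\<^sup>-\<^sup>1\<close>.\<close>

lemma inverse_family_eventually_bounded:
  fixes X :: "real \<Rightarrow> 'a::{real_normed_vector,complete_space} \<Rightarrow> 'a"
  assumes lin: "\<And>t. bounded_linear (X t)"
    and diff: "\<And>v. (\<lambda>t. X t v) differentiable (at x)"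
    and bij: "eventually (\<lambda>t. bij (X t)) (at x)" "bij (X x)"
    and inv_linear: "bounded_linear (inv (X x))"
  shows "\<exists>N. eventually (\<lambda>t. \<forall>z. norm (inv (X t) z) \<le> N * norm z) (at x)"
proof -
  obtain M \<delta> where M: "\<delta> > 0"
    "\<And>t v. \<bar>t - x\<bar> < \<delta> \<Longrightarrow> norm (X t v - X x v) \<le> M * \<bar>t - x\<bar> * norm v"
    using strongly_differentiable_locally_lipschitz[OF lin diff] by blast
  obtain N where N: "N > 0" "\<And>v. norm (inv (X x) v) \<le> N * norm v"
    using bounded_linear.pos_bounded[OF inv_linear] by (auto simp: mult.commute)
  have "((\<lambda>t. M * \<bar>t - x\<bar> * N) \<longlongrightarrow> M * 0 * N) (at x)"
    by (intro tendsto_intros tendsto_rabs_zero LIM_zero tendsto_ident_at)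
  then have "eventually (\<lambda>t. M * \<bar>t - x\<bar> * N < 1/2) (at x)"
    by (intro order_tendstoD(2)) auto
  moreover have "eventually (\<lambda>t. \<bar>t - x\<bar> < \<delta>) (at x)"
    using M(1) by (auto simp: eventually_at dist_real_def)
  ultimately have "eventually (\<lambda>t. \<forall>z. norm (inv (X t) z) \<le> 2 * N * norm z) (at x)"
    using bij(1)
  proof eventually_elim
    case (elim t)
    show ?case
    proof
      fix z
      define v where "v = inv (X t) z"
      have Xv: "X t v = z" using elim by (simp add: v_def bij_is_surj surj_f_inv_f)
      have "norm v \<le> N * norm (X x v)"
        using N(2)[of "X x v"] bij(2) by (simp add: bij_is_inj)
      also have "\<dots> \<le> N * (norm z + M * \<bar>t - x\<bar> * norm v)"
      proof -
        have "norm (X x v) \<le> norm (X t v) + norm (X t v - X x v)"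
          using norm_triangle_sub[of "X x v" "X t v"] by (simp add: norm_minus_commute)
        then show ?thesis
          using M(2)[of t v] elim N(1) Xv by (intro mult_left_mono) auto
      qed
      also have "\<dots> = N * norm z + (M * \<bar>t - x\<bar> * N) * norm v" by (simp add: algebra_simps)
      also have "\<dots> \<le> N * norm z + 1/2 * norm v"
        using elim by (intro add_left_mono mult_right_mono) auto
      finally show "norm (inv (X t) z) \<le> 2 * N * norm z" unfolding v_def by linarith
    qed
  qed
  then show ?thesis by blast
qed

lemma has_vector_derivative_inverse_family_apply:
  fixes X :: "real \<Rightarrow> 'a::{real_normed_vector,complete_space} \<Rightarrow> 'a"
  assumes lin: "\<And>t. bounded_linear (X t)"
    and "open \<Omega>" and "x \<in> \<Omega>"
    and bij: "\<And>t. t \<in> \<Omega> \<Longrightarrow> bij (X t)"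
    and inv_linear: "\<And>t. t \<in> \<Omega> \<Longrightarrow> bounded_linear (inv (X t))"
    and X_deriv: "\<And>v. ((\<lambda>t. X t v) has_vector_derivative X' v) (at x)"
    and w_deriv: "(w has_vector_derivative w') (at x)"
  shows "((\<lambda>t. inv (X t) (w t)) has_vector_derivative inv (X x) (w' - X' (inv (X x) (w x)))) (at x)"
proof -
  have near: "eventually (\<lambda>t. t \<in> \<Omega>) (at x)"
    using \<open>open \<Omega>\<close> \<open>x \<in> \<Omega>\<close> by (rule eventually_at_in_open')
  obtain N where N: "eventually (\<lambda>t. \<forall>z. norm (inv (X t) z) \<le> N * norm z) (at x)"
    using inverse_family_eventually_bounded[OF lin differentiableI_vector[OF X_deriv]
        eventually_mono[OF near bij] bij inv_linear] \<open>x \<in> \<Omega>\<close> by blast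
  define z0 where "z0 = inv (X x) (w x)"
  define p where "p = w' - X' z0"
  define z1 where "z1 = inv (X x) p"
  define q where "q t = (w t - w x) /\<^sub>R (t - x) - (X t z0 - X x z0) /\<^sub>R (t - x)" for t
  have q: "(q \<longlongrightarrow> p) (at x)"
    unfolding q_def[abs_def] p_def using w_deriv X_deriv[of z0]
    unfolding has_vector_derivative_iff_quotient by (rule tendsto_diff)
  have Xz0: "X x z0 = w x" and Xz1: "X x z1 = p"
    using bij \<open>x \<in> \<Omega>\<close> by (simp_all add: z0_def z1_def bij_is_surj surj_f_inv_f)
  have "((\<lambda>t. inv (X t) (q t - p)) \<longlongrightarrow> 0) (at x)"
    using N by (rule tendsto_zero_apply_uniformly_bounded) (use q in \<open>simp add: LIM_zero\<close>)
  moreover have "((\<lambda>t. inv (X t) (X x z1 - X t z1)) \<longlongrightarrow> 0) (at x)"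
  proof (rule tendsto_zero_apply_uniformly_bounded[OF N])
    have "((\<lambda>t. - (X t z1 - X x z1)) \<longlongrightarrow> - 0) (at x)"
      by (intro tendsto_minus has_vector_derivative_imp_tendsto_diff[OF X_deriv])
    then show "((\<lambda>t. X x z1 - X t z1) \<longlongrightarrow> 0) (at x)" by simp
  qed
  ultimately have "((\<lambda>t. inv (X t) (q t - p) + inv (X t) (X x z1 - X t z1) + z1)
      \<longlongrightarrow> inv (X x) (w' - X' (inv (X x) (w x)))) (at x)"
    using tendsto_add[OF tendsto_add tendsto_const] by (fastforce simp: p_def z0_def z1_def)
  then show ?thesis
    unfolding has_vector_derivative_iff_quotient
  proof (rule Lim_transform_eventually)
    have "eventually (\<lambda>t. t \<in> \<Omega> \<and> t \<noteq> x) (at x)"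
      using near by (simp add: eventually_conj_iff eventually_at_filter)
    then show "\<forall>\<^sub>F t in at x. inv (X t) (q t - p) + inv (X t) (X x z1 - X t z1) + z1 =
        (inv (X t) (w t) - inv (X x) (w x)) /\<^sub>R (t - x)"
    proof (rule eventually_mono)
      fix t assume t: "t \<in> \<Omega> \<and> t \<noteq> x"
      interpret Xi: bounded_linear "inv (X t)" using inv_linear t by blast
      have left_inv: "inv (X t) (X t v) = v" for v using bij t by (simp add: bij_is_inj)
      have "inv (X t) (q t - p) + inv (X t) (X x z1 - X t z1) + z1 = inv (X t) (q t)"
        using left_inv[of z1] by (simp add: Xi.diff Xz1)
      also have "\<dots> = (inv (X t) (w t) - inv (X t) (w x) - (inv (X t) (X t z0) - inv (X t) (X x z0))) /\<^sub>R (t - x)"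
        by (simp add: q_def Xi.diff Xi.scaleR scaleR_diff_right[symmetric] del: scaleR_diff_right)
      finally show "inv (X t) (q t - p) + inv (X t) (X x z1 - X t z1) + z1 =
        (inv (X t) (w t) - inv (X x) (w x)) /\<^sub>R (t - x)"
        using Xz0 left_inv[of z0] by (simp add: z0_def)
    qed
  qed
qed
lemma cmat_mult_vector:
  fixes f :: "complex^2 \<Rightarrow> complex^2"
  assumes add: "\<And>a b. f (a + b) = f a + f b" and scale: "\<And>c e. f (c *s e) = c *s f e"
  shows "cmat f *v v = f v"
proof -
  have "v = v$1 *s axis 1 1 + v$2 *s axis 2 1"
    by (simp add: vec_eq_iff forall_2 axis_def)
  then have "f v = v$1 *s f (axis 1 1) + v$2 *s f (axis 2 1)"
    by (metis add scale)
  then show ?thesis by (simp add: vec_eq_iff cmat_def matrix_vector_mult_def sum_2 mult.commute)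
qed

lemma resolvent_eqI:
  assumes "is_resolvent sc A D lam R"
  shows "resolvent sc A D lam = R"
  unfolding resolvent_def
proof (rule the_equality)
  show "is_resolvent sc A D lam R" by (rule assms)
  fix R' assume R': "is_resolvent sc A D lam R'"
  show "R' = R"
  proof
    fix u
    have "R' u \<in> D" and "sc lam (R' u) - A (R' u) = u"
      using R' by (auto simp: is_resolvent_def)
    then show "R' u = R u" using assms by (metis is_resolvent_def)
  qed
qed

locale vessel_data =
  fixes sc :: "complex \<Rightarrow> 'k::{real_normed_vector,complete_space} \<Rightarrow> 'k"
    and \<sigma>1 \<sigma>2 \<gamma> :: "complex^2^2"
    and A A\<zeta> :: "'k \<Rightarrow> 'k" and D :: "'k set"
    and C :: "real \<Rightarrow> 'k \<Rightarrow> complex^2" and X :: "real \<Rightarrow> 'k \<Rightarrow> 'k"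
    and B :: "real \<Rightarrow> complex^2 \<Rightarrow> 'k" and \<gamma>s :: "real \<Rightarrow> complex^2^2"
    and \<Omega> :: "real set"
  assumes vessel: "vessel sc \<sigma>1 \<sigma>2 \<gamma> A A\<zeta> D C X B \<gamma>s \<Omega>"
    and invertible_\<sigma>1: "invertible \<sigma>1"
    and open_\<Omega>: "open \<Omega>"
begin

lemma \<sigma>1_inverse: "\<sigma>1 *v (matrix_inv \<sigma>1 *v v) = v" "matrix_inv \<sigma>1 *v (\<sigma>1 *v v) = v"
proof -
  have "matrix_inv \<sigma>1 ** \<sigma>1 = mat 1" "\<sigma>1 ** matrix_inv \<sigma>1 = mat 1"
    using someI_ex[OF invertible_\<sigma>1[unfolded invertible_def]] by (auto simp: matrix_inv_def)
  then show "\<sigma>1 *v (matrix_inv \<sigma>1 *v v) = v" "matrix_inv \<sigma>1 *v (\<sigma>1 *v v) = v"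
    by (simp_all add: matrix_vector_mul_assoc)
qed

lemma C_linear: "bounded_linear (C t)" and C_scale: "C t (sc c v) = c *s C t v"
  and X_linear: "bounded_linear (X t)"
  and B_linear: "bounded_linear (B t)" and B_scale: "B t (c *s e) = sc c (B t e)"
  using vessel by (auto simp: vessel_def prevessel_def is_node_def clinear_to_def
      clinear_op_def clinear_from_def)

lemma node_equation: "v \<in> D \<Longrightarrow> A (X t v) + X t (A\<zeta> v) + B t (\<sigma>1 *v C t v) = 0"
  using vessel by (auto simp: vessel_def prevessel_def is_node_def)

lemma B_\<sigma>2_in_D: "B t (\<sigma>2 *v e) \<in> D"
  using vessel by (auto simp: vessel_def prevessel_def)

lemma has_vector_derivative_B_\<sigma>1:
  "((\<lambda>s. B s (\<sigma>1 *v e)) has_vector_derivative - (A (B t (\<sigma>2 *v e)) + B t (\<gamma> *v e))) (at t)"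
  using vessel \<sigma>1_inverse(2)[of e] unfolding vessel_def prevessel_def by metis

lemma B_differentiable: "(\<lambda>s. B s e) differentiable (at t)"
  using has_vector_derivative_B_\<sigma>1[of "matrix_inv \<sigma>1 *v e"] \<sigma>1_inverse(1)[of e]
  by (auto intro: differentiableI_vector)

lemma C_differentiable: "(\<lambda>s. C s v) differentiable (at t)"
  using vessel by (auto simp: vessel_def prevessel_def)

lemma has_vector_derivative_C:
  "v \<in> D \<Longrightarrow> ((\<lambda>s. C s v) has_vector_derivative
      matrix_inv \<sigma>1 *v (- (\<sigma>2 *v C t (A\<zeta> v)) + \<gamma> *v C t v)) (at t)"
  using vessel by (auto simp: vessel_def prevessel_def)

lemma has_vector_derivative_X: "((\<lambda>s. X s v) has_vector_derivative B t (\<sigma>2 *v C t v)) (at t)"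
  using vessel by (auto simp: vessel_def prevessel_def)

context
  fixes t assumes t_in: "t \<in> \<Omega>"
begin

lemma X_bij: "bij (X t)"
  and X_inv_linear: "bounded_linear (inv (X t))"
  and X_inv_scale: "inv (X t) (sc c v) = sc c (inv (X t) v)"
  and X_inv_D: "v \<in> D \<Longrightarrow> inv (X t) v \<in> D"
  using vessel t_in unfolding vessel_def invertible_node_def clinear_op_def by blast+

lemma cmat_C_X_inv_B: "cmat (\<lambda>e. C t (inv (X t) (B t (M *v e)))) *v v = C t (inv (X t) (B t (M *v v)))"
proof (rule cmat_mult_vector)
  interpret C: bounded_linear "C t" by (rule C_linear)
  interpret B: bounded_linear "B t" by (rule B_linear)
  interpret Xi: bounded_linear "inv (X t)" by (rule X_inv_linear)
  show "C t (inv (X t) (B t (M *v (a + b)))) =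
      C t (inv (X t) (B t (M *v a))) + C t (inv (X t) (B t (M *v b)))" for a b
    by (simp add: matrix_vector_right_distrib C.add B.add Xi.add)
  show "C t (inv (X t) (B t (M *v (c *s e)))) = c *s C t (inv (X t) (B t (M *v e)))" for c e
    by (simp add: vector_scalar_commute B_scale X_inv_scale C_scale)
qed

lemma linkage_mult:
  "\<gamma>s t *v v = \<gamma> *v v + \<sigma>2 *v C t (inv (X t) (B t (\<sigma>1 *v v)))
      - \<sigma>1 *v C t (inv (X t) (B t (\<sigma>2 *v v)))"
  using vessel t_in
  by (simp add: vessel_def matrix_vector_mult_diff_rdistrib matrix_vector_mult_add_rdistrib
      matrix_vector_mul_assoc[symmetric] cmat_C_X_inv_B)

lemma transfer_fn_mult:
  assumes "is_resolvent sc A D lam R"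
  shows "transfer_fn sc A D C X B \<sigma>1 lam t *v v = v - C t (inv (X t) (R (B t (\<sigma>1 *v v))))"
proof -
  interpret C: bounded_linear "C t" by (rule C_linear)
  interpret B: bounded_linear "B t" by (rule B_linear)
  interpret Xi: bounded_linear "inv (X t)" by (rule X_inv_linear)
  interpret R: bounded_linear R using assms by (simp add: is_resolvent_def clinear_op_def)
  have R_scale: "R (sc c w) = sc c (R w)" for c w
    using assms by (simp add: is_resolvent_def clinear_op_def)
  have "cmat (\<lambda>e. C t (inv (X t) (R (B t (\<sigma>1 *v e))))) *v v = C t (inv (X t) (R (B t (\<sigma>1 *v v))))"
    by (rule cmat_mult_vector) (simp_all add: matrix_vector_right_distrib C.add B.add R.add Xi.add
        vector_scalar_commute B_scale R_scale X_inv_scale C_scale)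
  then show ?thesis
    by (simp add: transfer_fn_def resolvent_eqI[OF assms] matrix_vector_mult_diff_rdistrib)
qed

end

context
  fixes lam :: complex and R :: "'k \<Rightarrow> 'k"
    and u :: "real \<Rightarrow> complex^2" and u' :: "complex^2" and x :: real
  assumes resolvent: "is_resolvent sc A D lam R"
    and u_deriv: "(u has_vector_derivative u') (at x)"
    and input_equation: "lam *s (\<sigma>2 *v u x) - \<sigma>1 *v u' + \<gamma> *v u x = 0"
    and x_in: "x \<in> \<Omega>"
begin

abbreviation state :: 'k where
  "state \<equiv> inv (X x) (R (B x (\<sigma>1 *v u x)))"

lemma R_linear: "bounded_linear R"
  and R_in_D: "R v \<in> D" and R_right_inverse: "sc lam (R v) - A (R v) = v"
  and R_left_inverse: "v \<in> D \<Longrightarrow> R (sc lam v - A v) = v"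
  using resolvent by (auto simp: is_resolvent_def clinear_op_def)

lemma state_in_D: "state \<in> D"
  using X_inv_D[OF x_in] R_in_D .

lemma \<sigma>1_u': "\<sigma>1 *v u' = lam *s (\<sigma>2 *v u x) + \<gamma> *v u x"
  using input_equation by (simp add: algebra_simps eq_neg_iff_add_eq_0 eq_diff_eq)

text \<open>The evolution law of \<open>B\<close> and the input equation combine to
\<open>\<partial>\<^sub>x (B \<sigma>\<^sub>1 u) = (\<lambda> - A) B \<sigma>\<^sub>2 u\<close>.\<close>

lemma has_vector_derivative_resolvent_input:
  "((\<lambda>t. R (B t (\<sigma>1 *v u t))) has_vector_derivative B x (\<sigma>2 *v u x)) (at x)"
proof -
  interpret B: bounded_linear "B x" by (rule B_linear)
  define b where "b = B x (\<sigma>2 *v u x)"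
  have "((\<lambda>t. B t (\<sigma>1 *v u t)) has_vector_derivative
      B x (\<sigma>1 *v u') - (A (B x (\<sigma>2 *v u x)) + B x (\<gamma> *v u x))) (at x)"
    using has_vector_derivative_family_apply[OF B_linear B_differentiable
        has_vector_derivative_B_\<sigma>1 bounded_linear.has_vector_derivative[OF
          matrix_vector_mul_bounded_linear u_deriv]]
    by (simp add: algebra_simps)
  also have "B x (\<sigma>1 *v u') - (A (B x (\<sigma>2 *v u x)) + B x (\<gamma> *v u x)) = sc lam b - A b"
    by (simp add: \<sigma>1_u' B.add B_scale b_def)
  finally have "((\<lambda>t. R (B t (\<sigma>1 *v u t))) has_vector_derivative R (sc lam b - A b)) (at x)"
    by (rule bounded_linear.has_vector_derivative[OF R_linear])
  then show ?thesis
    using R_left_inverse[OF B_\<sigma>2_in_D] by (simp add: b_def)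
qed

lemma has_vector_derivative_state:
  "((\<lambda>t. inv (X t) (R (B t (\<sigma>1 *v u t)))) has_vector_derivative
      inv (X x) (B x (\<sigma>2 *v (u x - C x state)))) (at x)"
proof -
  interpret B: bounded_linear "B x" by (rule B_linear)
  show ?thesis
    using has_vector_derivative_inverse_family_apply[OF X_linear open_\<Omega> x_in X_bij X_inv_linear
        has_vector_derivative_X has_vector_derivative_resolvent_input]
    by (simp add: B.diff matrix_vector_mult_diff_distrib)
qed

text \<open>From the node equation, since \<open>A \<bbbX> z = A (\<lambda> - A)\<^sup>-\<^sup>1 B \<sigma>\<^sub>1 u = \<lambda> \<bbbX> z - B \<sigma>\<^sub>1 u\<close>.\<close>

lemma C_A\<zeta>_state:
  "C x (A\<zeta> state) = C x (inv (X x) (B x (\<sigma>1 *v (u x - C x state)))) - lam *s C x state"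
proof -
  interpret C: bounded_linear "C x" by (rule C_linear)
  interpret B: bounded_linear "B x" by (rule B_linear)
  interpret Xi: bounded_linear "inv (X x)" by (rule X_inv_linear[OF x_in])
  define b where "b = B x (\<sigma>1 *v u x)"
  have X_state: "X x state = R b"
    using X_bij[OF x_in] by (simp add: b_def bij_is_surj surj_f_inv_f)
  have "X x (A\<zeta> state) = - A (X x state) - B x (\<sigma>1 *v C x state)"
    using node_equation[OF state_in_D, of x] by (simp add: eq_neg_iff_add_eq_0 algebra_simps)
  also have "\<dots> = B x (\<sigma>1 *v (u x - C x state)) - sc lam (X x state)"
    using R_right_inverse[of b]
    by (simp add: X_state b_def matrix_vector_mult_diff_distrib B.diff algebra_simps)
  finally have "A\<zeta> state = inv (X x) (B x (\<sigma>1 *v (u x - C x state)) - sc lam (X x state))"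
    using X_bij[OF x_in] by (metis bij_is_inj inv_f_f)
  also have "\<dots> = inv (X x) (B x (\<sigma>1 *v (u x - C x state))) - sc lam state"
    using X_bij[OF x_in] by (simp add: Xi.diff X_inv_scale[OF x_in] bij_is_inj)
  finally show ?thesis by (simp add: C.diff C_scale)
qed

lemma output_equation:
  "\<exists>y'. ((\<lambda>t. transfer_fn sc A D C X B \<sigma>1 lam t *v u t) has_vector_derivative y') (at x) \<and>
     lam *s (\<sigma>2 *v (transfer_fn sc A D C X B \<sigma>1 lam x *v u x)) - \<sigma>1 *v y'
       + \<gamma>s x *v (transfer_fn sc A D C X B \<sigma>1 lam x *v u x) = 0"
proof -
  define c where "c = C x state"
  define y where "y = u x - c"
  define K where "K e = C x (inv (X x) (B x e))" for e
  define w' where "w' = K (\<sigma>2 *v y) + matrix_inv \<sigma>1 *v (- (\<sigma>2 *v C x (A\<zeta> state)) + \<gamma> *v c)"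
  have "((\<lambda>t. C t (inv (X t) (R (B t (\<sigma>1 *v u t))))) has_vector_derivative w') (at x)"
    using has_vector_derivative_family_apply[OF C_linear C_differentiable
        has_vector_derivative_C[OF state_in_D] has_vector_derivative_state]
    by (simp add: w'_def K_def y_def c_def)
  then have "((\<lambda>t. u t - C t (inv (X t) (R (B t (\<sigma>1 *v u t))))) has_vector_derivative u' - w') (at x)"
    by (intro has_vector_derivative_diff u_deriv)
  then have deriv: "((\<lambda>t. transfer_fn sc A D C X B \<sigma>1 lam t *v u t) has_vector_derivative u' - w') (at x)"
    by (rule has_vector_derivative_transform_within_open[OF _ open_\<Omega> x_in])
      (simp add: transfer_fn_mult[OF _ resolvent])
  have output_eq: "transfer_fn sc A D C X B \<sigma>1 lam x *v u x = y"
    by (simp add: transfer_fn_mult[OF x_in resolvent] y_def c_def)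
  have \<sigma>1_w': "\<sigma>1 *v w' = \<sigma>1 *v K (\<sigma>2 *v y) - \<sigma>2 *v (K (\<sigma>1 *v y) - lam *s c) + \<gamma> *v c"
    using C_A\<zeta>_state
    by (simp add: w'_def \<sigma>1_inverse matrix_vector_right_distrib K_def y_def c_def
        matrix_vector_mult_diff_distrib)
  have linkage: "\<gamma>s x *v y = \<gamma> *v y + \<sigma>2 *v K (\<sigma>1 *v y) - \<sigma>1 *v K (\<sigma>2 *v y)"
    by (simp add: linkage_mult[OF x_in] K_def)
  have "lam *s (\<sigma>2 *v y) - \<sigma>1 *v (u' - w') + \<gamma>s x *v y =
      lam *s (\<sigma>2 *v y) - \<sigma>1 *v u' + \<sigma>1 *v w' + \<gamma>s x *v y"
    by (simp add: matrix_vector_mult_diff_distrib)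
  also have "\<dots> = lam *s (\<sigma>2 *v (y + c)) - \<sigma>1 *v u' + \<gamma> *v (y + c)"
    unfolding \<sigma>1_w' linkage
    by (simp add: matrix_vector_mult_diff_distrib matrix_vector_right_distrib
        vector_ssub_ldistrib vector_add_ldistrib vector_scalar_commute algebra_simps)
  also have "\<dots> = 0" by (simp add: y_def input_equation)
  finally show ?thesis using deriv output_eq by auto
qed

end

end

theorem mainTheorem3:
  fixes sc :: "complex \<Rightarrow> 'k::{real_inner,complete_space} \<Rightarrow> 'k"
    and F :: "'k \<Rightarrow> 'k \<Rightarrow> complex"
    and \<sigma>1 \<sigma>2 \<gamma> :: "complex^2^2"
    and A A\<zeta> :: "'k \<Rightarrow> 'k" and D :: "'k set"
    and C :: "real \<Rightarrow> 'k \<Rightarrow> complex^2" and X :: "real \<Rightarrow> 'k \<Rightarrow> 'k"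
    and B :: "real \<Rightarrow> complex^2 \<Rightarrow> 'k" and \<gamma>s :: "real \<Rightarrow> complex^2^2"
    and \<Omega> :: "real set" and lam :: complex and u :: "real \<Rightarrow> complex^2"
  assumes "krein_space sc F"
    and "invertible \<sigma>1" and "cadj \<sigma>1 = \<sigma>1" and "cadj \<sigma>2 = \<sigma>2" and "cadj \<gamma> = - \<gamma>"
    and "vessel sc \<sigma>1 \<sigma>2 \<gamma> A A\<zeta> D C X B \<gamma>s \<Omega>"
    and "open \<Omega>"
    and "lam \<notin> op_spectrum sc A D"
    and "\<forall>x\<in>\<Omega>. \<exists>u'. (u has_vector_derivative u') (at x) \<and>
           lam *s (\<sigma>2 *v u x) - \<sigma>1 *v u' + \<gamma> *v u x = 0"
  shows "\<forall>x\<in>\<Omega>. \<exists>y'.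
           ((\<lambda>t. transfer_fn sc A D C X B \<sigma>1 lam t *v u t) has_vector_derivative y') (at x) \<and>
           lam *s (\<sigma>2 *v (transfer_fn sc A D C X B \<sigma>1 lam x *v u x)) - \<sigma>1 *v y'
             + \<gamma>s x *v (transfer_fn sc A D C X B \<sigma>1 lam x *v u x) = 0"
proof
  fix x assume x: "x \<in> \<Omega>"
  interpret vessel_data sc \<sigma>1 \<sigma>2 \<gamma> A A\<zeta> D C X B \<gamma>s \<Omega>
    using assms(2,6,7) by unfold_locales
  obtain R where "is_resolvent sc A D lam R"
    using assms(8) by (auto simp: op_spectrum_def)
  moreover obtain u' where "(u has_vector_derivative u') (at x)"
    and "lam *s (\<sigma>2 *v u x) - \<sigma>1 *v u' + \<gamma> *v u x = 0"
    using assms(9) x by blast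
  ultimately show "\<exists>y'. ((\<lambda>t. transfer_fn sc A D C X B \<sigma>1 lam t *v u t) has_vector_derivative y') (at x) \<and>
      lam *s (\<sigma>2 *v (transfer_fn sc A D C X B \<sigma>1 lam x *v u x)) - \<sigma>1 *v y'
        + \<gamma>s x *v (transfer_fn sc A D C X B \<sigma>1 lam x *v u x) = 0"
    using output_equation x by blast
qed

end
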